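(* Let $\lambda_1\ge\dots\ge\lambda_p\ge0$, $\gamma\ge0$, $r\in\{1,\dots,p\}$ and $i\in\{1,\dots,p\}$. Let $M,\Gamma\in\mathbb{R}^p$ with $\max_j|\Gamma_j|\le\gamma$ and put $T=M+\Gamma$. If $T\in H_r$ and $|T_i|>\lambda_r$, then $M^{(i)}\in H_r^{\gamma}$.
   Context: For $w$ (possibly with entries in $\mathbb{R}\cup\{\infty\}$), $|w|_{(1)}\ge\dots\ge|w|_{(p)}$ denote the ordered absolute values of its entries. $M^{(i)}$ is the vector with $M^{(i)}_j=M_j$ for $j\neq i$ and $M^{(i)}_i=\infty$. $$H_r=\Big\{w:\ \forall_{j\le r}\ \sum_{l=j}^r\lambda_l<\sum_{l=j}^r|w|_{(l)}\ \text{ and }\ \forall_{j\ge r+1}\ \sum_{l=r+1}^j\lambda_l\ge\sum_{l=r+1}^j|w|_{(l)}\Big\},$$ $$H_r^{\gamma}=\Big\{w:\ \forall_{j\le r}\ \sum_{l=j}^r(\lambda_l-\gamma)<\sum_{l=j}^r|w|_{(l)}\ \text{ and }\ \forall_{j\ge r+1}\ \sum_{l=r+1}^j(\lambda_l+\gamma)\ge\sum_{l=r+1}^j|w|_{(l)}\Big\}.$$ *)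

theory Defs
  imports "HOL-Analysis.Analysis" "HOL-Library.Extended_Real"
begin

text \<open>Vectors in R^p (or with entries in R \<union> {\<infinity>}) are functions on indices 1..p.
  ord_abs p w l is the l-th largest absolute value |w|_(l) among |w_1|,...,|w_p| (1 \<le> l \<le> p).\<close>

definition ord_abs :: "nat \<Rightarrow> (nat \<Rightarrow> ereal) \<Rightarrow> nat \<Rightarrow> ereal" where
  "ord_abs p w l = rev (sort (map (\<lambda>j. \<bar>w j\<bar>) [1..<p+1])) ! (l - 1)"

definition H :: "nat \<Rightarrow> (nat \<Rightarrow> real) \<Rightarrow> nat \<Rightarrow> (nat \<Rightarrow> ereal) set" where
  "H p lam r = {w.
     (\<forall>j\<in>{1..r}. (\<Sum>l=j..r. ereal (lam l)) < (\<Sum>l=j..r. ord_abs p w l)) \<and>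
     (\<forall>j\<in>{r+1..p}. (\<Sum>l=r+1..j. ereal (lam l)) \<ge> (\<Sum>l=r+1..j. ord_abs p w l))}"

definition H_gamma :: "nat \<Rightarrow> (nat \<Rightarrow> real) \<Rightarrow> nat \<Rightarrow> real \<Rightarrow> (nat \<Rightarrow> ereal) set" where
  "H_gamma p lam r \<gamma> = {w.
     (\<forall>j\<in>{1..r}. (\<Sum>l=j..r. ereal (lam l - \<gamma>)) < (\<Sum>l=j..r. ord_abs p w l)) \<and>
     (\<forall>j\<in>{r+1..p}. (\<Sum>l=r+1..j. ereal (lam l + \<gamma>)) \<ge> (\<Sum>l=r+1..j. ord_abs p w l))}"

definition inf_at :: "(nat \<Rightarrow> real) \<Rightarrow> nat \<Rightarrow> nat \<Rightarrow> ereal" where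
  "inf_at M i = (\<lambda>j. if j = i then \<infinity> else ereal (M j))"

end

(* Order statistics move by at most gamma under a perturbation of size gamma: since
   |T_j| - gamma <= |M^(i)_j| for every j, also |T|_(l) - gamma <= |M^(i)|_(l), which turns
   the strict inequalities of H_r into those of H_r^gamma.  For l > r the reverse bound
   |M^(i)|_(l) <= |T|_(l) + gamma survives the infinite entry, because
   |T_i| > lambda_r >= lambda_(r+1) >= |T|_(r+1) >= |T|_(l): the index i is already among
   the entries of T lying strictly above |T|_(l), so replacing T_i by infinity does not
   increase their number. *)

theory Submission
  imports Defs
begin

lemma sorted_wrt_ge_nth_iff_length_filter:
  fixes xs :: "'a::linorder list"
  assumes sorted: "sorted_wrt (\<ge>) xs" and up: "\<And>a b. P a \<Longrightarrow> a \<le> b \<Longrightarrow> P b"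
    and l: "l < length xs"
  shows "P (xs ! l) \<longleftrightarrow> Suc l \<le> length (filter P xs)"
proof -
  let ?K = "{k. k < length xs \<and> P (xs ! k)}"
  have len: "length (filter P xs) = card ?K"
    by (rule length_filter_conv_card)
  have nth_le: "xs ! k \<le> xs ! k'" if "k' \<le> k" "k < length xs" for k k'
    using sorted_wrt_nth_less[OF sorted, of k' k] that by (cases "k' = k") auto
  show ?thesis
  proof
    assume "P (xs ! l)"
    then have "{..l} \<subseteq> ?K"
      using up nth_le l by fastforce
    from card_mono[OF _ this] show "Suc l \<le> length (filter P xs)"
      using len by simp
  next
    assume "Suc l \<le> length (filter P xs)"
    show "P (xs ! l)"
    proof (rule ccontr)
      assume "\<not> P (xs ! l)"
      have "?K \<subseteq> {..<l}"
      proof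
        fix k assume k: "k \<in> ?K"
        show "k \<in> {..<l}"
        proof (rule ccontr)
          assume "k \<notin> {..<l}"
          then have "xs ! k \<le> xs ! l"
            using nth_le k by simp
          with k up \<open>\<not> P (xs ! l)\<close> show False
            by blast
        qed
      qed
      from card_mono[OF _ this] have "card ?K \<le> l"
        by simp
      with \<open>Suc l \<le> length (filter P xs)\<close> show False
        using len by simp
    qed
  qed
qed

lemma ord_abs_upclosed_iff:
  assumes "1 \<le> l" "l \<le> p" and up: "\<And>a b. P a \<Longrightarrow> a \<le> b \<Longrightarrow> P b"
  shows "P (ord_abs p w l) \<longleftrightarrow> l \<le> card {j\<in>{1..p}. P \<bar>w j\<bar>}"
proof -
  let ?ys = "map (\<lambda>j. \<bar>w j\<bar>) [1..<p+1]"
  have "length (filter P (rev (sort ?ys))) = length (filter P ?ys)"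
    by (metis length_rev mset_filter mset_sort rev_filter size_mset)
  also have "\<dots> = length (filter (\<lambda>j. P \<bar>w j\<bar>) [1..<p+1])"
    by (simp add: filter_map o_def)
  also have "\<dots> = card (set (filter (\<lambda>j. P \<bar>w j\<bar>) [1..<p+1]))"
    by (metis distinct_card distinct_filter distinct_upt)
  also have "set (filter (\<lambda>j. P \<bar>w j\<bar>) [1..<p+1]) = {j\<in>{1..p}. P \<bar>w j\<bar>}"
    by auto
  finally have count: "length (filter P (rev (sort ?ys))) = card {j\<in>{1..p}. P \<bar>w j\<bar>}" .
  have "P (ord_abs p w l) \<longleftrightarrow> Suc (l - 1) \<le> length (filter P (rev (sort ?ys)))"
    unfolding ord_abs_def
    by (rule sorted_wrt_ge_nth_iff_length_filter[OF _ up]) (use assms in \<open>auto simp: sorted_wrt_rev\<close>)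
  with count show ?thesis
    using assms by simp
qed

lemma ord_abs_antimono:
  assumes "1 \<le> k" "k \<le> l" "l \<le> p"
  shows "ord_abs p w l \<le> ord_abs p w k"
proof -
  have "l \<le> card {j\<in>{1..p}. ord_abs p w l \<le> \<bar>w j\<bar>}"
    using ord_abs_upclosed_iff[of l p "\<lambda>x. ord_abs p w l \<le> x" w] assms by auto
  then show ?thesis
    using ord_abs_upclosed_iff[of k p "\<lambda>x. ord_abs p w l \<le> x" w] assms by auto
qed

lemma ord_abs_ereal_finite:
  assumes "1 \<le> l" "l \<le> p"
  shows "\<bar>ord_abs p (\<lambda>j. ereal (f j)) l\<bar> \<noteq> \<infinity>"
proof -
  let ?xs = "rev (sort (map (\<lambda>j. \<bar>ereal (f j)\<bar>) [1..<p+1]))"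
  have "?xs ! (l - 1) \<in> set ?xs"
    by (rule nth_mem) (use assms in simp)
  then show ?thesis
    unfolding ord_abs_def by auto
qed

lemma ord_abs_lower_perturbation:
  fixes u v :: "nat \<Rightarrow> ereal" and c :: real
  assumes l: "1 \<le> l" "l \<le> p" and dom: "\<And>j. j \<in> {1..p} \<Longrightarrow> \<bar>u j\<bar> - c \<le> \<bar>v j\<bar>"
  shows "ord_abs p u l - c \<le> ord_abs p v l"
proof -
  have "l \<le> card {j\<in>{1..p}. ord_abs p u l \<le> \<bar>u j\<bar>}"
    using ord_abs_upclosed_iff[of l p "\<lambda>x. ord_abs p u l \<le> x" u] l by auto
  also have "\<dots> \<le> card {j\<in>{1..p}. ord_abs p u l - c \<le> \<bar>v j\<bar>}"
  proof (rule card_mono)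
    show "{j\<in>{1..p}. ord_abs p u l \<le> \<bar>u j\<bar>} \<subseteq> {j\<in>{1..p}. ord_abs p u l - c \<le> \<bar>v j\<bar>}"
      using dom by (auto intro: order_trans[OF ereal_minus_mono[OF _ order_refl]])
  qed simp
  finally show ?thesis
    using ord_abs_upclosed_iff[of l p "\<lambda>x. ord_abs p u l - c \<le> x" v] l by auto
qed

lemma ord_abs_upper_perturbation:
  fixes u v :: "nat \<Rightarrow> ereal" and c :: real
  assumes l: "1 \<le> l" "l \<le> p"
    and dom: "\<And>j. j \<in> {1..p} \<Longrightarrow> \<bar>v j\<bar> \<le> \<bar>u j\<bar> + c \<or> ord_abs p u l < \<bar>u j\<bar>"
  shows "ord_abs p v l \<le> ord_abs p u l + c"
proof (rule ccontr)
  assume "\<not> ord_abs p v l \<le> ord_abs p u l + c"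
  then have "ord_abs p u l + c < ord_abs p v l"
    by simp
  then have "l \<le> card {j\<in>{1..p}. ord_abs p u l + c < \<bar>v j\<bar>}"
    using ord_abs_upclosed_iff[of l p "\<lambda>x. ord_abs p u l + c < x" v] l by auto
  also have "\<dots> \<le> card {j\<in>{1..p}. ord_abs p u l < \<bar>u j\<bar>}"
  proof (rule card_mono)
    show "{j\<in>{1..p}. ord_abs p u l + c < \<bar>v j\<bar>} \<subseteq> {j\<in>{1..p}. ord_abs p u l < \<bar>u j\<bar>}"
    proof safe
      fix j assume j: "j \<in> {1..p}" and big: "ord_abs p u l + c < \<bar>v j\<bar>"
      show "ord_abs p u l < \<bar>u j\<bar>"
      proof (cases "\<bar>v j\<bar> \<le> \<bar>u j\<bar> + c")
        case True
        with big have "ord_abs p u l + c < \<bar>u j\<bar> + c"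
          by (rule order.strict_trans2)
        then show ?thesis
          by (meson add_right_mono not_less)
      next
        case False
        then show ?thesis
          using dom[OF j] by blast
      qed
    qed
  qed simp
  finally show False
    using ord_abs_upclosed_iff[of l p "\<lambda>x. ord_abs p u l < x" u, OF l less_le_trans] by simp
qed

lemma sum_ereal_shift_down_less:
  fixes a b :: "'i \<Rightarrow> real" and c :: "'i \<Rightarrow> ereal"
  assumes "(\<Sum>l\<in>A. a l) < (\<Sum>l\<in>A. b l)" and "\<And>l. l \<in> A \<Longrightarrow> ereal (b l - \<gamma>) \<le> c l"
  shows "(\<Sum>l\<in>A. ereal (a l - \<gamma>)) < (\<Sum>l\<in>A. c l)"
proof -
  have "(\<Sum>l\<in>A. ereal (a l - \<gamma>)) = ereal ((\<Sum>l\<in>A. a l) - (\<Sum>l\<in>A. \<gamma>))"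
    by (simp add: sum_ereal sum_subtractf)
  also have "\<dots> < ereal ((\<Sum>l\<in>A. b l) - (\<Sum>l\<in>A. \<gamma>))"
    using assms(1) by simp
  also have "\<dots> = (\<Sum>l\<in>A. ereal (b l - \<gamma>))"
    by (simp add: sum_ereal sum_subtractf)
  also have "\<dots> \<le> (\<Sum>l\<in>A. c l)"
    by (rule sum_mono) (rule assms(2))
  finally show ?thesis .
qed

lemma sum_ereal_shift_up_le:
  fixes a b :: "'i \<Rightarrow> real" and c :: "'i \<Rightarrow> ereal"
  assumes "(\<Sum>l\<in>A. b l) \<le> (\<Sum>l\<in>A. a l)" and "\<And>l. l \<in> A \<Longrightarrow> c l \<le> ereal (b l + \<gamma>)"
  shows "(\<Sum>l\<in>A. c l) \<le> (\<Sum>l\<in>A. ereal (a l + \<gamma>))"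
proof -
  have "(\<Sum>l\<in>A. c l) \<le> (\<Sum>l\<in>A. ereal (b l + \<gamma>))"
    by (rule sum_mono) (rule assms(2))
  also have "\<dots> = ereal ((\<Sum>l\<in>A. b l) + (\<Sum>l\<in>A. \<gamma>))"
    by (simp add: sum_ereal sum.distrib)
  also have "\<dots> \<le> ereal ((\<Sum>l\<in>A. a l) + (\<Sum>l\<in>A. \<gamma>))"
    using assms(1) by simp
  also have "\<dots> = (\<Sum>l\<in>A. ereal (a l + \<gamma>))"
    by (simp add: sum_ereal sum.distrib)
  finally show ?thesis .
qed

lemma H_gamma_if_ord_abs_close:
  fixes f :: "nat \<Rightarrow> real" and v :: "nat \<Rightarrow> ereal"
  defines "u \<equiv> \<lambda>j. ereal (f j)"
  assumes u_H: "u \<in> H p lam r" and "r \<le> p"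
    and lower: "\<And>l. l \<in> {1..p} \<Longrightarrow> ord_abs p u l - \<gamma> \<le> ord_abs p v l"
    and upper: "\<And>l. l \<in> {r+1..p} \<Longrightarrow> ord_abs p v l \<le> ord_abs p u l + \<gamma>"
  shows "v \<in> H_gamma p lam r \<gamma>"
proof -
  define t where "t = (\<lambda>l. real_of_ereal (ord_abs p u l))"
  have t: "ord_abs p u l = ereal (t l)" if "l \<in> {1..p}" for l
    using ord_abs_ereal_finite[of l p f] that unfolding t_def u_def by (simp add: ereal_real')
  have sum_t: "(\<Sum>l\<in>A. ord_abs p u l) = ereal (\<Sum>l\<in>A. t l)" if "A \<subseteq> {1..p}" for A
    using t that by (simp add: sum_ereal subset_eq)
  have head: "(\<Sum>l=j..r. lam l) < (\<Sum>l=j..r. t l)" if j: "j \<in> {1..r}" for j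
  proof -
    have "(\<Sum>l=j..r. ereal (lam l)) < (\<Sum>l=j..r. ord_abs p u l)"
      using u_H j unfolding H_def by blast
    then show ?thesis
      using sum_t[of "{j..r}"] j \<open>r \<le> p\<close> by (simp add: sum_ereal)
  qed
  have tail: "(\<Sum>l=r+1..j. t l) \<le> (\<Sum>l=r+1..j. lam l)" if j: "j \<in> {r+1..p}" for j
  proof -
    have "(\<Sum>l=r+1..j. ord_abs p u l) \<le> (\<Sum>l=r+1..j. ereal (lam l))"
      using u_H j unfolding H_def by blast
    then show ?thesis
      using sum_t[of "{r+1..j}"] j by (simp add: sum_ereal)
  qed
  show ?thesis
    unfolding H_gamma_def mem_Collect_eq
  proof (intro conjI ballI)
    fix j assume "j \<in> {1..r}"
    then show "(\<Sum>l=j..r. ereal (lam l - \<gamma>)) < (\<Sum>l=j..r. ord_abs p v l)"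
      using lower t \<open>r \<le> p\<close> by (intro sum_ereal_shift_down_less[OF head]) auto
  next
    fix j assume "j \<in> {r+1..p}"
    then show "(\<Sum>l=r+1..j. ord_abs p v l) \<le> (\<Sum>l=r+1..j. ereal (lam l + \<gamma>))"
      using upper t by (intro sum_ereal_shift_up_le[OF tail]) auto
  qed
qed

lemma H_ord_abs_succ_le:
  assumes "u \<in> H p lam r" "r < p"
  shows "ord_abs p u (r+1) \<le> lam (r+1)"
proof -
  have "\<forall>j\<in>{r+1..p}. (\<Sum>l=r+1..j. ord_abs p u l) \<le> (\<Sum>l=r+1..j. ereal (lam l))"
    using assms(1) unfolding H_def by blast
  from bspec[OF this, of "r+1"] show ?thesis
    using assms(2) by simp
qed

theorem lemma2:
  fixes p r i :: nat and lam M \<Gamma> T :: "nat \<Rightarrow> real" and \<gamma> :: real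
  assumes lam_mono: "\<And>a b. 1 \<le> a \<Longrightarrow> a \<le> b \<Longrightarrow> b \<le> p \<Longrightarrow> lam b \<le> lam a"
    and lam_nonneg: "\<And>a. 1 \<le> a \<Longrightarrow> a \<le> p \<Longrightarrow> 0 \<le> lam a"
    and gamma_nonneg: "0 \<le> \<gamma>"
    and r: "r \<in> {1..p}" and i: "i \<in> {1..p}"
    and Gamma_bd: "\<And>j. j \<in> {1..p} \<Longrightarrow> \<bar>\<Gamma> j\<bar> \<le> \<gamma>"
    and T_def: "\<And>j. T j = M j + \<Gamma> j"
    and T_H: "(\<lambda>j. ereal (T j)) \<in> H p lam r"
    and T_big: "\<bar>T i\<bar> > lam r"
  shows "inf_at M i \<in> H_gamma p lam r \<gamma>"
proof -
  define u where "u = (\<lambda>j. ereal (T j))"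
  have lower: "ord_abs p u l - \<gamma> \<le> ord_abs p (inf_at M i) l" if "l \<in> {1..p}" for l
  proof (rule ord_abs_lower_perturbation)
    show "\<bar>u j\<bar> - \<gamma> \<le> \<bar>inf_at M i j\<bar>" if "j \<in> {1..p}" for j
      using Gamma_bd[OF that] T_def[of j] by (auto simp: u_def inf_at_def)
  qed (use that in auto)
  have i_above: "ord_abs p u l < \<bar>u i\<bar>" if l: "l \<in> {r+1..p}" for l
  proof -
    have "ord_abs p u l \<le> ord_abs p u (r+1)"
      using ord_abs_antimono[of "r+1" l p u] l by auto
    also have "\<dots> \<le> lam (r+1)"
      using H_ord_abs_succ_le[OF T_H[folded u_def]] l by simp
    also have "\<dots> \<le> lam r"
      using lam_mono[of r "r+1"] r l by simp
    also have "\<dots> < \<bar>u i\<bar>"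
      using T_big by (simp add: u_def)
    finally show ?thesis .
  qed
  have upper: "ord_abs p (inf_at M i) l \<le> ord_abs p u l + \<gamma>" if l: "l \<in> {r+1..p}" for l
  proof (rule ord_abs_upper_perturbation)
    show "\<bar>inf_at M i j\<bar> \<le> \<bar>u j\<bar> + \<gamma> \<or> ord_abs p u l < \<bar>u j\<bar>" if "j \<in> {1..p}" for j
      using Gamma_bd[OF that] T_def[of j] i_above[OF l] by (auto simp: u_def inf_at_def)
  qed (use l in auto)
  show ?thesis
    using H_gamma_if_ord_abs_close[of T p lam r, folded u_def] T_H r lower upper
    unfolding u_def by auto
qed

end
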